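(* Let $N,M,k$ be positive integers, and for $x\in\mathbb{Z}_N^k$, $w\in\mathbb{Z}_N$ let $\eta^x_w:=|\{b\in\{0,\ldots,M-1\}^k : b\cdot x\equiv w \pmod N\}|$. Define $$P:=\frac{1}{M^kN^{k+1}}\sum_{x\in\mathbb{Z}_N^k}\Big(\sum_{w\in\mathbb{Z}_N}\sqrt{\eta^x_w}\Big)^2 .$$ Suppose $\alpha,\beta>0$ are such that $\Pr(\eta^x_w\ge\alpha)\ge\beta$ when $x\in\mathbb{Z}_N^k$ and $w\in\mathbb{Z}_N$ are chosen independently and uniformly at random. Then $\alpha\beta^2N/M^k\le P\le M^k/N$.
   Context: $P$ is the success probability of the pretty good measurement for identifying the hidden shift from $k$ copies of the generalized hidden shift states. $b\cdot x=\sum_{i=1}^k b_ix_i$. *)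

theory Defs
  imports "HOL-Analysis.Analysis" "HOL-Library.FuncSet"
begin

definition ZNk :: "nat \<Rightarrow> nat \<Rightarrow> (nat \<Rightarrow> nat) set" where
  "ZNk N k = ({0..<k} \<rightarrow>\<^sub>E {0..<N})"

definition dotp :: "nat \<Rightarrow> (nat \<Rightarrow> nat) \<Rightarrow> (nat \<Rightarrow> nat) \<Rightarrow> nat" where
  "dotp k b x = (\<Sum>i<k. b i * x i)"

definition eta :: "nat \<Rightarrow> nat \<Rightarrow> nat \<Rightarrow> (nat \<Rightarrow> nat) \<Rightarrow> nat \<Rightarrow> nat" where
  "eta N M k x w = card {b \<in> ZNk M k. dotp k b x mod N = w mod N}"

definition succP :: "nat \<Rightarrow> nat \<Rightarrow> nat \<Rightarrow> real" where
  "succP N M k = (1 / (real M ^ k * real N ^ (k + 1))) *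
     (\<Sum>x\<in>ZNk N k. (\<Sum>w\<in>{0..<N}. sqrt (real (eta N M k x w)))\<^sup>2)"

definition probEta :: "nat \<Rightarrow> nat \<Rightarrow> nat \<Rightarrow> real \<Rightarrow> real" where
  "probEta N M k \<alpha> = real (card {(x, w). x \<in> ZNk N k \<and> w \<in> {0..<N} \<and> real (eta N M k x w) \<ge> \<alpha>})
      / (real N ^ k * real N)"

end

theory Submission
  imports Defs
begin

(* The residues w of b \<cdot> x partition the M^k vectors b, so \<Sum>_w \<eta>^x_w = M^k; since
   sqrt n \<le> n on naturals, every inner sum \<Sum>_w sqrt \<eta>^x_w is at most M^k, which gives
   the upper bound.  For the lower bound let s(x) be the number of w with \<eta>^x_w \<ge> \<alpha>.
   Then \<Sum>_w sqrt \<eta>^x_w \<ge> sqrt \<alpha> s(x), the hypothesis says \<Sum>_x s(x) \<ge> \<beta> N^(k+1),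
   and Cauchy-Schwarz over the N^k values of x turns this into \<Sum>_x s(x)^2 \<ge> \<beta>^2 N^(k+2). *)

lemma finite_ZNk: "finite (ZNk N k)"
  unfolding ZNk_def by (simp add: finite_PiE)

lemma card_ZNk: "card (ZNk N k) = N ^ k"
  unfolding ZNk_def by (simp add: card_PiE)

lemma sum_eta:
  assumes "N > 0"
  shows "(\<Sum>w\<in>{0..<N}. eta N M k x w) = M ^ k"
proof -
  have "(\<Sum>w\<in>{0..<N}. eta N M k x w)
      = (\<Sum>w\<in>{0..<N}. \<Sum>b\<in>{b \<in> ZNk M k. dotp k b x mod N = w}. (1::nat))"
    by (rule sum.cong) (auto simp: eta_def)
  also have "\<dots> = (\<Sum>b\<in>ZNk M k. (1::nat))"
    by (rule sum.group) (use assms in \<open>auto simp: finite_ZNk\<close>)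
  finally show ?thesis
    by (simp add: card_ZNk)
qed

lemma sqrt_of_nat_le_self: "sqrt (real n) \<le> real n"
proof (cases "n = 0")
  case False
  then have "real n \<le> real n ^ 2"
    by (simp add: power2_eq_square)
  then show ?thesis
    by (simp add: real_sqrt_le_iff' power2_eq_square)
qed simp

lemma sum_sqrt_eta_le:
  assumes "N > 0"
  shows "(\<Sum>w\<in>{0..<N}. sqrt (real (eta N M k x w))) \<le> real M ^ k"
proof -
  have "(\<Sum>w\<in>{0..<N}. sqrt (real (eta N M k x w))) \<le> (\<Sum>w\<in>{0..<N}. real (eta N M k x w))"
    by (intro sum_mono sqrt_of_nat_le_self)
  also have "\<dots> = real M ^ k"
    using sum_eta[OF assms, of M k x] by (metis of_nat_power of_nat_sum)
  finally show ?thesis .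
qed

lemma sqrt_mult_card_threshold_le_sum_sqrt:
  fixes g :: "'a \<Rightarrow> real"
  assumes "finite A" "\<alpha> \<ge> 0" "\<And>w. w \<in> A \<Longrightarrow> g w \<ge> 0"
  shows "sqrt \<alpha> * card {w \<in> A. \<alpha> \<le> g w} \<le> (\<Sum>w\<in>A. sqrt (g w))"
proof -
  have "sqrt \<alpha> * card {w \<in> A. \<alpha> \<le> g w} = (\<Sum>w\<in>{w \<in> A. \<alpha> \<le> g w}. sqrt \<alpha>)"
    by simp
  also have "\<dots> \<le> (\<Sum>w\<in>{w \<in> A. \<alpha> \<le> g w}. sqrt (g w))"
    by (intro sum_mono) auto
  also have "\<dots> \<le> (\<Sum>w\<in>A. sqrt (g w))"
    using assms by (intro sum_mono2) auto
  finally show ?thesis .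
qed

lemma probEta_eq_sum_card:
  "probEta N M k \<alpha> =
     (\<Sum>x\<in>ZNk N k. real (card {w \<in> {0..<N}. \<alpha> \<le> real (eta N M k x w)})) / real N ^ (k + 1)"
proof -
  have "{(x, w). x \<in> ZNk N k \<and> w \<in> {0..<N} \<and> real (eta N M k x w) \<ge> \<alpha>}
      = Sigma (ZNk N k) (\<lambda>x. {w \<in> {0..<N}. \<alpha> \<le> real (eta N M k x w)})"
    by auto
  then show ?thesis
    unfolding probEta_def by (simp add: card_SigmaI finite_ZNk)
qed

lemma succP_le:
  assumes "N > 0"
  shows "succP N M k \<le> real M ^ k / real N"
proof -
  have "(\<Sum>x\<in>ZNk N k. (\<Sum>w\<in>{0..<N}. sqrt (real (eta N M k x w)))\<^sup>2)
      \<le> (\<Sum>x\<in>ZNk N k. (real M ^ k)\<^sup>2)"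
    using assms by (intro sum_mono power_mono sum_sqrt_eta_le sum_nonneg) auto
  then have "succP N M k \<le> 1 / (real M ^ k * real N ^ (k + 1)) * (real N ^ k * (real M ^ k)\<^sup>2)"
    unfolding succP_def by (intro mult_left_mono) (auto simp: card_ZNk)
  also have "\<dots> = real M ^ k / real N"
    using assms by (cases "M = 0") (simp_all add: power2_eq_square)
  finally show ?thesis .
qed

lemma succP_ge:
  assumes "N > 0" "\<alpha> \<ge> 0" "\<beta> \<ge> 0" "probEta N M k \<alpha> \<ge> \<beta>"
  shows "\<alpha> * \<beta>\<^sup>2 * real N / real M ^ k \<le> succP N M k"
proof -
  define s where "s x = real (card {w \<in> {0..<N}. \<alpha> \<le> real (eta N M k x w)})" for x
  have "\<beta> * real N ^ (k + 1) \<le> (\<Sum>x\<in>ZNk N k. s x)"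
    using assms(1,4) by (simp add: probEta_eq_sum_card s_def field_simps)
  then have "(\<beta> * real N ^ (k + 1))\<^sup>2 \<le> (\<Sum>x\<in>ZNk N k. s x)\<^sup>2"
    using assms(3) by (intro power_mono) auto
  also have "\<dots> \<le> real N ^ k * (\<Sum>x\<in>ZNk N k. (s x)\<^sup>2)"
    using sum_squared_le_sum_of_squares[of s "ZNk N k"] by (simp add: card_ZNk mult.commute)
  finally have "real N ^ k * (\<beta>\<^sup>2 * real N ^ (k + 2)) \<le> real N ^ k * (\<Sum>x\<in>ZNk N k. (s x)\<^sup>2)"
    by (simp add: power_mult_distrib power_add power2_eq_square mult_ac)
  then have sum_s_squared: "\<beta>\<^sup>2 * real N ^ (k + 2) \<le> (\<Sum>x\<in>ZNk N k. (s x)\<^sup>2)"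
    using assms(1) by simp
  have "\<alpha> * (s x)\<^sup>2 \<le> (\<Sum>w\<in>{0..<N}. sqrt (real (eta N M k x w)))\<^sup>2" for x
  proof -
    have "sqrt \<alpha> * s x \<le> (\<Sum>w\<in>{0..<N}. sqrt (real (eta N M k x w)))"
      unfolding s_def using assms(2) by (intro sqrt_mult_card_threshold_le_sum_sqrt) auto
    then have "(sqrt \<alpha> * s x)\<^sup>2 \<le> (\<Sum>w\<in>{0..<N}. sqrt (real (eta N M k x w)))\<^sup>2"
      using assms(2) by (intro power_mono) (auto simp: s_def)
    then show ?thesis
      using assms(2) by (simp add: power_mult_distrib)
  qed
  then have "\<alpha> * (\<Sum>x\<in>ZNk N k. (s x)\<^sup>2)
      \<le> (\<Sum>x\<in>ZNk N k. (\<Sum>w\<in>{0..<N}. sqrt (real (eta N M k x w)))\<^sup>2)"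
    by (simp add: sum_distrib_left sum_mono)
  with sum_s_squared assms(2) have "\<alpha> * (\<beta>\<^sup>2 * real N ^ (k + 2))
      \<le> (\<Sum>x\<in>ZNk N k. (\<Sum>w\<in>{0..<N}. sqrt (real (eta N M k x w)))\<^sup>2)"
    by (meson mult_left_mono order_trans)
  then have "1 / (real M ^ k * real N ^ (k + 1)) * (\<alpha> * (\<beta>\<^sup>2 * real N ^ (k + 2))) \<le> succP N M k"
    unfolding succP_def by (intro mult_left_mono) auto
  also have "1 / (real M ^ k * real N ^ (k + 1)) * (\<alpha> * (\<beta>\<^sup>2 * real N ^ (k + 2)))
      = \<alpha> * \<beta>\<^sup>2 * real N / real M ^ k"
    using assms(1) by (simp add: power_add field_simps)
  finally show ?thesis .
qed

theorem lemma1: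
  fixes N M k :: nat and \<alpha> \<beta> :: real
  assumes "N > 0" "M > 0" "k > 0" "\<alpha> > 0" "\<beta> > 0"
    and "probEta N M k \<alpha> \<ge> \<beta>"
  shows "\<alpha> * \<beta>\<^sup>2 * real N / real M ^ k \<le> succP N M k
       \<and> succP N M k \<le> real M ^ k / real N"
  using succP_ge[of N \<alpha> \<beta> M k] succP_le[of N M k] assms by auto

end
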